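(* Let $A$ be an $m\times m$ coloring matrix, let $m'\ge1$, and let $A'$ be the $(m+m')\times(m+m')$ block matrix $$A'=\left[\begin{array}{c|c}A&0\\\hline \mathbf{1}&\mathbf{1}\end{array}\right],$$ where the bottom blocks are the $m'\times m$ and $m'\times m'$ all-ones matrices and the upper right block is zero. Then $$F_{A'}(x)=F_A(x)+F_{A'}(x)^2-F_{A'}(x)F_A(x)+m'x,$$ and consequently $$F_{A'}(x)=\frac{1+F_A(x)-\sqrt{(1-F_A(x))^2-4m'x}}{2}.$$
   Context: A plane tree is an unlabeled rooted tree in which the children of every vertex are linearly ordered. A coloring matrix is a square matrix $A=(a_{ij})$ with entries in $\{0,1\}$. An $A$-coloring of a plane tree assigns to each vertex a color (an index of a row of $A$) such that whenever a vertex of color $j$ is a child of a vertex of color $i$, $a_{ij}=1$. Let $t_A(n)$ be the number of pairs (plane tree with $n$ vertices, $A$-coloring of it), and $F_A(x)=\sum_{n\ge1}t_A(n)x^n$ (formal power series; the square root is the formal power series branch with constant term $1$). *)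

theory Defs
  imports "HOL-Computational_Algebra.Formal_Power_Series" "HOL-Library.FuncSet"
begin

datatype ptree = Node "ptree list"

text \<open>Vertices of a plane tree, addressed by paths from the root
  (list of child indices); the parent of vertex p@[i] is p.\<close>
function positions :: "ptree \<Rightarrow> nat list set" where
  "positions (Node ts) = insert [] (\<Union>i<length ts. (Cons i) ` positions (ts ! i))"
  by pat_completeness auto
termination
  by (relation "measure size") (auto intro!: size_list_estimation' nth_mem simp: less_Suc_eq_le)

definition num_vertices :: "ptree \<Rightarrow> nat" where
  "num_vertices T = card (positions T)"

text \<open>A coloring matrix of size m is A :: nat \<Rightarrow> nat \<Rightarrow> nat with entries in {0,1}
  on the index range {..<m}.\<close>
definition is_coloring :: "(nat \<Rightarrow> nat \<Rightarrow> nat) \<Rightarrow> nat \<Rightarrow> ptree \<Rightarrow> (nat list \<Rightarrow> nat) \<Rightarrow> bool" where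
  "is_coloring A m T c \<longleftrightarrow>
     c \<in> extensional (positions T) \<and>
     (\<forall>p\<in>positions T. c p < m) \<and>
     (\<forall>p i. p @ [i] \<in> positions T \<longrightarrow> A (c p) (c (p @ [i])) = 1)"

definition t_count :: "(nat \<Rightarrow> nat \<Rightarrow> nat) \<Rightarrow> nat \<Rightarrow> nat \<Rightarrow> nat" where
  "t_count A m n = card {(T, c). num_vertices T = n \<and> is_coloring A m T c}"

definition F_gen :: "(nat \<Rightarrow> nat \<Rightarrow> nat) \<Rightarrow> nat \<Rightarrow> real fps" where
  "F_gen A m = Abs_fps (\<lambda>n. if n = 0 then 0 else of_nat (t_count A m n))"

definition block_ext :: "(nat \<Rightarrow> nat \<Rightarrow> nat) \<Rightarrow> nat \<Rightarrow> nat \<Rightarrow> nat \<Rightarrow> nat" where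
  "block_ext A m i j = (if i < m then (if j < m then A i j else 0) else 1)"

end

theory Submission
  imports Defs
begin

text \<open>
  An A-colored plane tree is the same thing as a tree whose nodes carry colors, i.e. a root
  color together with the list of colored subtrees. In the block matrix A' the new colors
  m, ..., m + m' - 1 admit children of every color, while an old color only admits old colors,
  governed by A. Hence the A'-colored trees with an old root color are exactly the A-colored
  trees, and F_A' = F_A + H, where H counts the A'-colored trees with a new root color.
  Detaching the first subtree of such a tree leaves a tree of the same kind unless the tree is
  a single vertex, so H = m'x + F_A' H. Eliminating H gives the quadratic equation, and
  1 + F_A - 2 F_A' is the square root of its discriminant with constant term 1.
\<close>

unbundle fps_syntax

section \<open>Colored plane trees\<close>

lemma Nil_in_positions [simp]: "[] \<in> positions T"
  by (cases T) auto

lemma Cons_in_positions [simp]: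
  "i # p \<in> positions (Node ts) \<longleftrightarrow> i < length ts \<and> p \<in> positions (ts ! i)"
  by auto

lemma finite_positions: "finite (positions T)"
  by (induction T) auto

lemma num_vertices_Node: "num_vertices (Node ts) = Suc (sum_list (map num_vertices ts))"
proof -
  let ?C = "\<Union>i<length ts. (Cons i) ` positions (ts ! i)"
  have "card ?C = (\<Sum>i<length ts. card ((Cons i) ` positions (ts ! i)))"
    by (rule card_UN_disjoint) (auto simp: finite_positions)
  also have "\<dots> = sum_list (map num_vertices ts)"
    by (simp add: card_image num_vertices_def sum_list_sum_nth atLeast0LessThan)
  moreover have "finite ?C" "[] \<notin> ?C"
    by (auto simp: finite_positions)
  ultimately show ?thesis
    unfolding num_vertices_def positions.simps by (simp add: card_insert_disjoint)
qed

declare positions.simps [simp del]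

datatype ctree = CNode nat "ctree list"

fun root_color :: "ctree \<Rightarrow> nat" where
  "root_color (CNode r ts) = r"

fun ctree_size :: "ctree \<Rightarrow> nat" where
  "ctree_size (CNode r ts) = Suc (sum_list (map ctree_size ts))"

fun admissible :: "(nat \<Rightarrow> nat \<Rightarrow> nat) \<Rightarrow> nat \<Rightarrow> ctree \<Rightarrow> bool" where
  "admissible B k (CNode r ts) \<longleftrightarrow>
     r < k \<and> (\<forall>t\<in>set ts. admissible B k t \<and> B r (root_color t) = 1)"

fun shape :: "ctree \<Rightarrow> ptree" where
  "shape (CNode r ts) = Node (map shape ts)"

text \<open>The value undefined off the vertex set makes coloring t extensional, as is_coloring demands.\<close>

function coloring :: "ctree \<Rightarrow> nat list \<Rightarrow> nat" where
  "coloring (CNode r ts) [] = r"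
| "coloring (CNode r ts) (i # p) = (if i < length ts then coloring (ts ! i) p else undefined)"
  by pat_completeness auto
termination
  by (relation "measure (size \<circ> fst)")
    (auto intro!: size_list_estimation' nth_mem simp: less_Suc_eq_le)

lemma coloring_Nil: "coloring t [] = root_color t"
  by (cases t) auto

lemma num_vertices_shape: "num_vertices (shape t) = ctree_size t"
  by (induction t) (simp add: num_vertices_Node o_def cong: map_cong)

lemma is_coloring_Node:
  "is_coloring B k (Node ts) c \<longleftrightarrow>
     c \<in> extensional (positions (Node ts)) \<and> c [] < k \<and>
     (\<forall>i<length ts. B (c []) (c [i]) = 1 \<and> is_coloring B k (ts ! i) (\<lambda>p. c (i # p)))"
  (is "?lhs \<longleftrightarrow> ?rhs")
proof
  assume c: ?lhs
  have edge: "B (c p) (c (p @ [j])) = 1" if "p @ [j] \<in> positions (Node ts)" for p j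
    using c that unfolding is_coloring_def by blast
  have "is_coloring B k (ts ! i) (\<lambda>p. c (i # p))" if i: "i < length ts" for i
    unfolding is_coloring_def
  proof (intro conjI allI impI ballI)
    show "(\<lambda>p. c (i # p)) \<in> extensional (positions (ts ! i))"
      using c i by (auto simp: is_coloring_def extensional_def)
    show "c (i # p) < k" if "p \<in> positions (ts ! i)" for p
      using c i that unfolding is_coloring_def by simp
    show "B (c (i # p)) (c (i # p @ [j])) = 1" if "p @ [j] \<in> positions (ts ! i)" for p j
      using edge[of "i # p" j] i that by simp
  qed
  moreover have "B (c []) (c [i]) = 1" if "i < length ts" for i
    using edge[of "[]" i] that by simp
  ultimately show ?rhs
    using c Nil_in_positions unfolding is_coloring_def by blast
next
  assume c: ?rhs
  show ?lhs
    unfolding is_coloring_def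
  proof (intro conjI allI impI ballI)
    show "c \<in> extensional (positions (Node ts))"
      using c by blast
    show "c p < k" if "p \<in> positions (Node ts)" for p
      using c that by (cases p) (auto simp: is_coloring_def)
    show "B (c p) (c (p @ [j])) = 1" if "p @ [j] \<in> positions (Node ts)" for p j
      using c that by (cases p) (auto simp: is_coloring_def)
  qed
qed

lemma is_coloring_shape_coloring: "admissible B k t \<Longrightarrow> is_coloring B k (shape t) (coloring t)"
proof (induction t)
  case (CNode r ts)
  have "coloring (CNode r ts) p = undefined" if "p \<notin> positions (shape (CNode r ts))" for p
  proof (cases p)
    case (Cons i q)
    with that CNode show ?thesis
      by (auto simp: is_coloring_def extensional_def)
  qed (use that in simp)
  then have "coloring (CNode r ts) \<in> extensional (positions (shape (CNode r ts)))"
    by (simp add: extensional_def)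
  then show ?case
    using CNode by (auto simp: is_coloring_Node coloring_Nil)
qed

lemma ctree_eqI: "shape s = shape t \<Longrightarrow> coloring s = coloring t \<Longrightarrow> s = t"
proof (induction s arbitrary: t)
  case (CNode r ss)
  obtain r' ts where t: "t = CNode r' ts"
    by (cases t)
  have len: "length ss = length ts"
    using CNode.prems(1) t by (metis length_map ptree.inject shape.simps)
  have "ss ! i = ts ! i" if i: "i < length ss" for i
  proof (rule CNode.IH)
    show "ss ! i \<in> set ss"
      using i by simp
    show "shape (ss ! i) = shape (ts ! i)"
      using CNode.prems(1) t i len by (metis nth_map ptree.inject shape.simps)
    show "coloring (ss ! i) = coloring (ts ! i)"
    proof
      fix q
      show "coloring (ss ! i) q = coloring (ts ! i) q"
        using fun_cong[OF CNode.prems(2), of "i # q"] t i len by simp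
    qed
  qed
  moreover have "r = r'"
    using fun_cong[OF CNode.prems(2), of "[]"] t by simp
  ultimately show ?case
    using t len by (simp add: nth_equalityI)
qed

lemma is_coloring_obtains_ctree:
  assumes "is_coloring B k T c"
  obtains t where "admissible B k t" "shape t = T" "coloring t = c"
  using assms
proof (induction T arbitrary: c thesis)
  case (Node ts)
  note c = Node.prems(2)[unfolded is_coloring_Node]
  have "\<exists>u. admissible B k u \<and> shape u = ts ! i \<and> coloring u = (\<lambda>p. c (i # p))"
    if i: "i < length ts" for i
    by (rule Node.IH[OF nth_mem[OF i]]) (use c i in auto)
  then obtain f where f: "\<And>i. i < length ts \<Longrightarrow>
      admissible B k (f i) \<and> shape (f i) = ts ! i \<and> coloring (f i) = (\<lambda>p. c (i # p))"
    by metis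
  have root_f: "root_color (f i) = c [i]" if "i < length ts" for i
    using f[OF that] coloring_Nil[of "f i"] by simp
  let ?t = "CNode (c []) (map f [0..<length ts])"
  have "admissible B k ?t"
    using c f root_f by auto
  moreover have "shape ?t = Node ts"
    using f by (auto intro: nth_equalityI)
  moreover have "coloring ?t = c"
  proof
    fix p
    show "coloring ?t p = c p"
    proof (cases p)
      case (Cons i q)
      then show ?thesis
        using f c by (auto simp: extensional_def)
    qed simp
  qed
  ultimately show ?case
    by (rule Node.prems(1))
qed

definition colored_trees :: "(nat \<Rightarrow> nat \<Rightarrow> nat) \<Rightarrow> nat \<Rightarrow> nat \<Rightarrow> ctree set" where
  "colored_trees B k n = {t. admissible B k t \<and> ctree_size t = n}"

lemma t_count_eq_card_colored_trees: "t_count B k n = card (colored_trees B k n)"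
proof -
  let ?pair = "\<lambda>t. (shape t, coloring t)"
  have "{(T, c). num_vertices T = n \<and> is_coloring B k T c} = ?pair ` colored_trees B k n"
  proof (intro equalityI subsetI)
    fix x
    assume "x \<in> {(T, c). num_vertices T = n \<and> is_coloring B k T c}"
    then obtain T c where x: "x = (T, c)" "num_vertices T = n" "is_coloring B k T c"
      by blast
    obtain t where "admissible B k t" "shape t = T" "coloring t = c"
      by (rule is_coloring_obtains_ctree[OF x(3)])
    then show "x \<in> ?pair ` colored_trees B k n"
      using x num_vertices_shape[of t] by (auto simp: colored_trees_def)
  qed (auto simp: colored_trees_def num_vertices_shape is_coloring_shape_coloring)
  moreover have "inj_on ?pair (colored_trees B k n)"
    by (auto intro!: inj_onI ctree_eqI)
  ultimately show ?thesis
    unfolding t_count_def by (simp add: card_image)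
qed

lemma ctree_size_neq_0 [simp]: "ctree_size t \<noteq> 0"
  by (cases t) auto

lemma length_le_sum_list_ctree_size: "length ts \<le> sum_list (map ctree_size ts)"
proof (induction ts)
  case (Cons s ts)
  then show ?case
    using ctree_size_neq_0[of s] by (simp del: ctree_size_neq_0)
qed simp

lemma finite_admissible_size_le: "finite {t. admissible B k t \<and> ctree_size t \<le> n}"
proof (induction n)
  case 0
  then show ?case
    by simp
next
  case (Suc n)
  let ?S = "{t. admissible B k t \<and> ctree_size t \<le> n}"
  have "{t. admissible B k t \<and> ctree_size t \<le> Suc n} \<subseteq>
        case_prod CNode ` ({..<k} \<times> {ts. set ts \<subseteq> ?S \<and> length ts \<le> n})"
  proof
    fix t
    assume t: "t \<in> {t. admissible B k t \<and> ctree_size t \<le> Suc n}"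
    obtain r ts where [simp]: "t = CNode r ts"
      by (cases t)
    have "set ts \<subseteq> ?S"
      using t member_le_sum_list[of _ "map ctree_size ts"] by fastforce
    moreover have "length ts \<le> n"
      using t length_le_sum_list_ctree_size[of ts] by simp
    ultimately show "t \<in> case_prod CNode ` ({..<k} \<times> {ts. set ts \<subseteq> ?S \<and> length ts \<le> n})"
      using t by auto
  qed
  moreover have "finite ({..<k} \<times> {ts. set ts \<subseteq> ?S \<and> length ts \<le> n})"
    using Suc by (simp add: finite_lists_length_le)
  ultimately show ?case
    by (meson finite_imageI finite_subset)
qed

lemma finite_colored_trees: "finite (colored_trees B k n)"
  by (rule finite_subset[OF _ finite_admissible_size_le[of B k n]]) (auto simp: colored_trees_def)

lemma F_gen_nth: "F_gen B k $ n = real (card (colored_trees B k n))"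
  by (simp add: F_gen_def t_count_eq_card_colored_trees colored_trees_def)

lemma F_gen_nth_0: "F_gen B k $ 0 = 0"
  by (simp add: F_gen_def)

section \<open>Trees colored by the block matrix\<close>

lemma admissible_root_color: "admissible B k t \<Longrightarrow> root_color t < k"
  by (cases t) auto

lemma admissible_block_ext_iff:
  "m \<le> K \<Longrightarrow> admissible (block_ext A m) K t \<and> root_color t < m \<longleftrightarrow> admissible A m t"
  by (induction t) (auto simp: block_ext_def admissible_root_color)

definition fresh_rooted_trees :: "(nat \<Rightarrow> nat \<Rightarrow> nat) \<Rightarrow> nat \<Rightarrow> nat \<Rightarrow> nat \<Rightarrow> ctree set" where
  "fresh_rooted_trees A m K n = {t \<in> colored_trees (block_ext A m) K n. m \<le> root_color t}"

lemma finite_fresh_rooted_trees: "finite (fresh_rooted_trees A m K n)"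
  using finite_colored_trees by (simp add: fresh_rooted_trees_def)

definition fresh_root_gf :: "(nat \<Rightarrow> nat \<Rightarrow> nat) \<Rightarrow> nat \<Rightarrow> nat \<Rightarrow> real fps" where
  "fresh_root_gf A m K = Abs_fps (\<lambda>n. real (card (fresh_rooted_trees A m K n)))"

lemma F_gen_block_ext:
  assumes "m \<le> K"
  shows "F_gen (block_ext A m) K = F_gen A m + fresh_root_gf A m K"
proof (rule fps_ext)
  fix n
  have "colored_trees (block_ext A m) K n = colored_trees A m n \<union> fresh_rooted_trees A m K n"
    using admissible_block_ext_iff[OF assms, of A] not_less
    by (auto simp: colored_trees_def fresh_rooted_trees_def)
  moreover have "colored_trees A m n \<inter> fresh_rooted_trees A m K n = {}"
    using admissible_root_color by (force simp: colored_trees_def fresh_rooted_trees_def)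
  ultimately show "F_gen (block_ext A m) K $ n = (F_gen A m + fresh_root_gf A m K) $ n"
    by (simp add: F_gen_nth fresh_root_gf_def card_Un_disjoint finite_colored_trees
        finite_fresh_rooted_trees)
qed

fun graft :: "ctree \<times> ctree \<Rightarrow> ctree" where
  "graft (s, CNode r ts) = CNode r (s # ts)"

lemma inj_graft: "inj graft"
  by (auto simp: inj_def elim!: graft.elims)

lemma leaf_neq_graft: "CNode r [] \<noteq> graft p"
  by (cases p rule: graft.cases) simp

lemma graft_in_fresh_rooted_trees:
  "graft (s, u) \<in> fresh_rooted_trees A m K n \<longleftrightarrow>
     ctree_size s \<le> n \<and> s \<in> colored_trees (block_ext A m) K (ctree_size s) \<and>
     u \<in> fresh_rooted_trees A m K (n - ctree_size s)"
proof (cases u)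
  case (CNode r ts)
  have "block_ext A m r (root_color s) = 1" if "m \<le> r"
    using that by (simp add: block_ext_def)
  then show ?thesis
    using CNode by (auto simp: fresh_rooted_trees_def colored_trees_def)
qed

lemma fresh_rooted_trees_decompose:
  "fresh_rooted_trees A m K n =
     (if n = 1 then (\<lambda>r. CNode r []) ` {m..<K} else {}) \<union>
     (\<Union>j\<in>{0..n}. graft ` (colored_trees (block_ext A m) K j \<times> fresh_rooted_trees A m K (n - j)))"
  (is "_ = ?leaves \<union> ?grafts")
proof (intro equalityI subsetI)
  fix t
  assume t: "t \<in> fresh_rooted_trees A m K n"
  obtain r ts where t_eq: "t = CNode r ts"
    by (cases t)
  show "t \<in> ?leaves \<union> ?grafts"
  proof (cases ts)
    case Nil
    then show ?thesis
      using t t_eq by (auto simp: fresh_rooted_trees_def colored_trees_def)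
  next
    case (Cons s ts')
    then have t_graft: "t = graft (s, CNode r ts')"
      using t_eq by simp
    have "ctree_size s \<le> n" "s \<in> colored_trees (block_ext A m) K (ctree_size s)"
      "CNode r ts' \<in> fresh_rooted_trees A m K (n - ctree_size s)"
      using t unfolding t_graft graft_in_fresh_rooted_trees by blast+
    then show ?thesis
      unfolding t_graft by (intro UnI2 UN_I[of "ctree_size s"] imageI) auto
  qed
next
  fix t
  assume "t \<in> ?leaves \<union> ?grafts"
  then show "t \<in> fresh_rooted_trees A m K n"
  proof
    assume "t \<in> ?leaves"
    then show ?thesis
      by (auto simp: fresh_rooted_trees_def colored_trees_def split: if_splits)
  next
    assume "t \<in> ?grafts"
    then obtain j s u where j: "j \<le> n" "t = graft (s, u)" "s \<in> colored_trees (block_ext A m) K j"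
      "u \<in> fresh_rooted_trees A m K (n - j)"
      by auto
    moreover have "ctree_size s = j"
      using j(3) by (simp add: colored_trees_def)
    ultimately show ?thesis
      by (simp add: graft_in_fresh_rooted_trees)
  qed
qed

lemma card_fresh_rooted_trees:
  "card (fresh_rooted_trees A m K n) = (if n = 1 then K - m else 0) +
     (\<Sum>j=0..n. card (colored_trees (block_ext A m) K j) * card (fresh_rooted_trees A m K (n - j)))"
proof -
  let ?leaves = "if n = 1 then (\<lambda>r. CNode r []) ` {m..<K} else {}"
  let ?X = "\<lambda>j. graft ` (colored_trees (block_ext A m) K j \<times> fresh_rooted_trees A m K (n - j))"
  have card_X: "card (?X j) =
      card (colored_trees (block_ext A m) K j) * card (fresh_rooted_trees A m K (n - j))" for j
    by (simp add: card_image inj_on_subset[OF inj_graft] card_cartesian_product)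
  have disjoint: "?X i \<inter> ?X j = {}" if "i \<noteq> j" for i j
  proof -
    have "colored_trees (block_ext A m) K i \<inter> colored_trees (block_ext A m) K j = {}"
      using that by (auto simp: colored_trees_def)
    then show ?thesis
      by (auto simp: image_Int[OF inj_graft, symmetric])
  qed
  have "card (\<Union>j\<in>{0..n}. ?X j) = (\<Sum>j=0..n. card (?X j))"
    by (rule card_UN_disjoint)
      (use disjoint in \<open>auto simp: finite_colored_trees finite_fresh_rooted_trees\<close>)
  moreover have "card ?leaves = (if n = 1 then K - m else 0)"
    by (simp add: card_image inj_on_def)
  moreover have "?leaves \<inter> (\<Union>j\<in>{0..n}. ?X j) = {}"
    by (auto simp: leaf_neq_graft)
  ultimately show ?thesis
    by (subst fresh_rooted_trees_decompose)
      (simp add: card_Un_disjoint finite_colored_trees finite_fresh_rooted_trees card_X)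
qed

lemma fresh_root_gf_eq:
  "fresh_root_gf A m K =
     fps_const (real (K - m)) * fps_X + F_gen (block_ext A m) K * fresh_root_gf A m K"
proof (rule fps_ext)
  fix n
  have "(F_gen (block_ext A m) K * fresh_root_gf A m K) $ n = real (\<Sum>j=0..n.
      card (colored_trees (block_ext A m) K j) * card (fresh_rooted_trees A m K (n - j)))"
    by (simp add: fps_mult_nth F_gen_nth fresh_root_gf_def)
  then show "fresh_root_gf A m K $ n =
      (fps_const (real (K - m)) * fps_X + F_gen (block_ext A m) K * fresh_root_gf A m K) $ n"
    using card_fresh_rooted_trees[of A m K n] by (simp add: fresh_root_gf_def)
qed

section \<open>Solving the quadratic equation\<close>

lemma fps_quadratic_root:
  fixes F G :: "real fps" and c :: real
  assumes F0: "F $ 0 = 0" and G0: "G $ 0 = 0"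
    and eq: "G = F + G\<^sup>2 - G * F + fps_const c * fps_X"
  shows "G = fps_const (1/2) *
    (1 + F - fps_radical (\<lambda>k x. root k x) 2 ((1 - F)\<^sup>2 - fps_const (4 * c) * fps_X))"
proof -
  let ?D = "(1 - F)\<^sup>2 - fps_const (4 * c) * fps_X"
  let ?a = "1 + F - 2 * G"
  have "?a\<^sup>2 - ?D = 4 * (F + G\<^sup>2 - G * F + fps_const c * fps_X - G)"
    by (simp add: algebra_simps power2_eq_square numeral_fps_const)
  then have "?a ^ Suc 1 = ?D"
    using eq by (simp only: Suc_1) simp
  moreover have "?D $ 0 = 1" "?a $ 0 = 1"
    using F0 G0 by (simp_all add: power2_eq_square)
  ultimately have "?a = fps_radical (\<lambda>k x. root k x) (Suc 1) ?D"
    using radical_unique[of "\<lambda>k x. root k x" 1 ?D ?a] by simp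
  then have root: "fps_radical (\<lambda>k x. root k x) 2 ?D = ?a"
    by (simp only: Suc_1)
  show ?thesis
    unfolding root by (simp add: numeral_fps_const)
qed

theorem theorem26:
  fixes A :: "nat \<Rightarrow> nat \<Rightarrow> nat" and m m' :: nat
  assumes "\<forall>i<m. \<forall>j<m. A i j \<in> {0, 1}"
    and "m' \<ge> 1"
  shows "F_gen (block_ext A m) (m + m') =
           F_gen A m + F_gen (block_ext A m) (m + m') ^ 2
           - F_gen (block_ext A m) (m + m') * F_gen A m + fps_const (real m') * fps_X \<and>
         F_gen (block_ext A m) (m + m') =
           fps_const (1/2) * (1 + F_gen A m
             - fps_radical (\<lambda>k x. root k x) 2 ((1 - F_gen A m) ^ 2 - fps_const (4 * real m') * fps_X))"
proof -
  let ?F = "F_gen A m" and ?G = "F_gen (block_ext A m) (m + m')"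
  let ?H = "fresh_root_gf A m (m + m')"
  have G: "?G = ?F + ?H"
    by (rule F_gen_block_ext) simp
  have H: "?H = fps_const (real m') * fps_X + ?G * ?H"
    using fresh_root_gf_eq[of A m "m + m'"] by simp
  have "?G = ?F + ?G\<^sup>2 - ?G * ?F + fps_const (real m') * fps_X"
    using G H by (simp add: algebra_simps power2_eq_square)
  then show ?thesis
    using fps_quadratic_root[OF F_gen_nth_0 F_gen_nth_0] by blast
qed

end
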